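(* Let $x_i,x_j\in\{x_1,\dots,x_n\}$ be adjacent observations, i.e. $x_i<x_j$ and there is no $x'\in\{x_1,\dots,x_n\}$ with $x_i<x'<x_j$. For any $\theta\in\mathbb{V}\cap\Theta$, the result \[\theta^*:=\arg\max_{v\in\mathbb{V}_{D(\theta)}\cap\Theta_1}L(v)\] of a local search over $\mathbb{V}_{D(\theta)}\cap\Theta_1$ has at most two breakpoints between $x_i$ and $x_j$, i.e. $|D(\theta^* )\cap(x_i,x_j)|\le2$.
   Context: Let $f$ be a probability density on $\mathbb{R}_{\ge0}$ satisfying the standing assumptions: (A1) $f$ is continuous and $f(x)>0$ for all $x>0$; (A2) there is $\beta\in\mathbb{R}$ such that for every $\lambda\in\mathbb{R}$, $\int_0^\infty e^{\lambda x}f(x)\,dx<\infty$ if and only if $\lambda<\beta$, and $\lim_{\lambda\to\beta^-}\int_0^\infty e^{\lambda x}f(x)\,dx=\infty$; (A3) for every $\lambda\in\mathbb{R}$, $\int_0^\infty e^{\lambda x}f(x)dx<\infty$ implies $\int_0^\infty x^2e^{\lambda x}f(x)dx<\infty$. Let $M$ be the measure on $\mathbb{R}_{\ge0}$ with density $f$. Fix data $x_1,\dots,x_n$ in $\mathbb{R}_{\ge0}$ with empirical distribution $\hat P=\frac1n\sum_{i=1}^n\delta_{x_i}$. $\Theta$ is the set of convex non-decreasing functions $\theta:\mathbb{R}_{\ge0}\to\mathbb{R}$, and $\Theta_1=\{\theta\in\Theta:\int e^{\theta}dM=1\}$. For $\theta\in\Theta$, $L(\theta):=\int\theta\,d\hat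 P-\int e^{\theta}\,dM+1\in[-\infty,\infty)$. $\mathbb{V}$ is the set of continuous piecewise linear functions $v:\mathbb{R}_{\ge0}\to\mathbb{R}$ with finitely many breakpoints; $D(v)=\{\tau\ge0: v'(\tau-)\neq v'(\tau+)\}$ is its set of breakpoints; for finite $S\subset\mathbb{R}_{\ge0}$, $\mathbb{V}_S=\{v\in\mathbb{V}:D(v)\subseteq S\}$. *)

theory Defs
  imports "HOL-Analysis.Analysis"
begin

text \<open>Functions on the half-line [0,oo) are represented as total functions
  real => real; only their values on {0..} matter for all notions below.\<close>

definition base_measure :: "(real \<Rightarrow> real) \<Rightarrow> real measure" where
  "base_measure f = density lborel (\<lambda>x. ennreal (f x * indicator {0..} x))"

definition standing_assumptions :: "(real \<Rightarrow> real) \<Rightarrow> bool" where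
  "standing_assumptions f \<longleftrightarrow>
     (\<forall>x\<ge>0. f x \<ge> 0) \<and>
     (\<integral>\<^sup>+x. ennreal (f x * indicator {0..} x) \<partial>lborel) = 1 \<and>
     continuous_on {0..} f \<and> (\<forall>x>0. f x > 0) \<and>
     (\<exists>\<beta>::real. (\<forall>l::real. (\<integral>\<^sup>+x. ennreal (exp (l * x)) \<partial>base_measure f) < \<infinity> \<longleftrightarrow> l < \<beta>) \<and>
        ((\<lambda>l. \<integral>\<^sup>+x. ennreal (exp (l * x)) \<partial>base_measure f) \<longlongrightarrow> \<infinity>) (at_left \<beta>)) \<and>
     (\<forall>l::real. (\<integral>\<^sup>+x. ennreal (exp (l * x)) \<partial>base_measure f) < \<infinity> \<longrightarrow>
        (\<integral>\<^sup>+x. ennreal (x\<^sup>2 * exp (l * x)) \<partial>base_measure f) < \<infinity>)"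

definition Theta :: "(real \<Rightarrow> real) set" where
  "Theta = {\<theta>. convex_on {0..} \<theta> \<and> mono_on {0..} \<theta>}"

definition Theta1 :: "(real \<Rightarrow> real) \<Rightarrow> (real \<Rightarrow> real) set" where
  "Theta1 f = {\<theta>\<in>Theta. (\<integral>\<^sup>+x. ennreal (exp (\<theta> x)) \<partial>base_measure f) = 1}"

definition Lfun :: "(real \<Rightarrow> real) \<Rightarrow> (nat \<Rightarrow> real) \<Rightarrow> nat \<Rightarrow> (real \<Rightarrow> real) \<Rightarrow> ereal" where
  "Lfun f x n \<theta> = ereal ((1 / real n) * (\<Sum>k=1..n. \<theta> (x k)))
      - enn2ereal (\<integral>\<^sup>+t. ennreal (exp (\<theta> t)) \<partial>base_measure f) + 1"

definition Vset :: "(real \<Rightarrow> real) set" where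
  "Vset = {v. continuous_on {0..} v \<and>
      (\<exists>S. finite S \<and> (\<forall>a b. 0 \<le> a \<and> a < b \<and> {a<..<b} \<inter> S = {} \<longrightarrow>
            (\<exists>c d. \<forall>t\<in>{a..b}. v t = c * t + d)))}"

text \<open>Breakpoints: points where left and right derivatives differ
  (at 0 there is no left derivative on the half-line, so only tau > 0 can qualify).\<close>
definition breakpoints :: "(real \<Rightarrow> real) \<Rightarrow> real set" where
  "breakpoints v = {\<tau>. 0 < \<tau> \<and> (\<exists>d1 d2. (v has_real_derivative d1) (at_left \<tau>) \<and>
                       (v has_real_derivative d2) (at_right \<tau>) \<and> d1 \<noteq> d2)}"

definition V_on :: "real set \<Rightarrow> (real \<Rightarrow> real) set" where
  "V_on S = {v\<in>Vset. breakpoints v \<subseteq> S}"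

end

(*
  If the maximizer had three breakpoints \<tau>1 < \<tau>2 < \<tau>3 strictly between two adjacent
  observations, subtract \<epsilon> times the tent function that vanishes outside (\<tau>1, \<tau>3) and
  equals 1 at \<tau>2. Because the maximizer is convex with genuine kinks at \<tau>1 and \<tau>3, for
  small \<epsilon> > 0 the result is still convex and nondecreasing; it is piecewise affine with
  breakpoints among those of the maximizer, and it is unchanged at every observation.
  Its exponential integral drops to some r < 1, since the base measure charges every
  interval, so renormalizing adds the constant -ln r > 0 everywhere. This raises the
  empirical term of L and contradicts maximality.
*)

theory Submission
  imports Defs
begin

section \<open>One-sided derivatives of convex functions\<close>

lemma convex_on_slope_from_point_mono:
  fixes g :: "real \<Rightarrow> real"
  assumes cvx: "convex_on I g" and "y \<in> I" "z \<in> I" "\<tau> \<in> I" "y < z" "y \<noteq> \<tau>" "z \<noteq> \<tau>"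
  shows "(g y - g \<tau>) / (y - \<tau>) \<le> (g z - g \<tau>) / (z - \<tau>)"
proof -
  have swap: "(g a - g b) / (a - b) = (g b - g a) / (b - a)" for a b
    by (simp add: divide_simps) (simp add: algebra_simps)
  consider "z < \<tau>" | "y < \<tau>" "\<tau> < z" | "\<tau> < y" using assms by linarith
  then show ?thesis
  proof cases
    case 1 then show ?thesis using convex_on_slope_le(2)[OF cvx, of y \<tau> z] assms by auto
  next
    case 2 then show ?thesis
      using convex_on_slope_le[OF cvx, of y z \<tau>] assms by (auto simp: swap[of \<tau> z])
  next
    case 3 then show ?thesis
      using convex_on_slope_le(1)[OF cvx, of \<tau> z y] assms by (auto simp: swap)
  qed
qed

context
  fixes g :: "real \<Rightarrow> real" and I :: "real set" and \<tau> :: real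
  assumes cvx: "convex_on I g" and \<tau>: "\<tau> \<in> interior I"
begin

private lemma eventually_in_domain:
  "eventually (\<lambda>y. y \<in> I \<and> y < \<tau>) (at_left \<tau>)" "eventually (\<lambda>y. y \<in> I \<and> \<tau> < y) (at_right \<tau>)"
proof -
  have "eventually (\<lambda>y. y \<in> I) (at \<tau>)"
    using eventually_nhds_in_nhd[OF \<tau>] by (simp add: eventually_at_filter eventually_mono)
  then show "eventually (\<lambda>y. y \<in> I \<and> y < \<tau>) (at_left \<tau>)" "eventually (\<lambda>y. y \<in> I \<and> \<tau> < y) (at_right \<tau>)"
    unfolding eventually_at_split eventually_at_filter by (auto elim: eventually_mono)
qed

private lemma slope_mono:
  "y \<in> I \<Longrightarrow> z \<in> I \<Longrightarrow> y < z \<Longrightarrow> y \<noteq> \<tau> \<Longrightarrow> z \<noteq> \<tau> \<Longrightarrow>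
    (g y - g \<tau>) / (y - \<tau>) \<le> (g z - g \<tau>) / (z - \<tau>)"
  using convex_on_slope_from_point_mono[OF cvx] \<tau> interior_subset by blast

lemma convex_on_slope_le_left_deriv:
  assumes dl: "(g has_real_derivative dl) (at_left \<tau>)" and t: "t \<in> I" "t < \<tau>"
  shows "(g t - g \<tau>) / (t - \<tau>) \<le> dl"
proof (rule tendsto_lowerbound[OF _ _ trivial_limit_at_left_real])
  show "((\<lambda>y. (g y - g \<tau>) / (y - \<tau>)) \<longlongrightarrow> dl) (at_left \<tau>)"
    using dl by (simp add: has_field_derivative_iff)
  show "eventually (\<lambda>y. (g t - g \<tau>) / (t - \<tau>) \<le> (g y - g \<tau>) / (y - \<tau>)) (at_left \<tau>)"
    using eventually_in_domain(1) eventually_at_left_real[OF t(2)]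
    by eventually_elim (use t in \<open>auto intro!: slope_mono\<close>)
qed

lemma convex_on_right_deriv_le_slope:
  assumes dr: "(g has_real_derivative dr) (at_right \<tau>)" and t: "t \<in> I" "\<tau> < t"
  shows "dr \<le> (g t - g \<tau>) / (t - \<tau>)"
proof (rule tendsto_upperbound[OF _ _ trivial_limit_at_right_real])
  show "((\<lambda>y. (g y - g \<tau>) / (y - \<tau>)) \<longlongrightarrow> dr) (at_right \<tau>)"
    using dr by (simp add: has_field_derivative_iff)
  show "eventually (\<lambda>y. (g y - g \<tau>) / (y - \<tau>) \<le> (g t - g \<tau>) / (t - \<tau>)) (at_right \<tau>)"
    using eventually_in_domain(2) eventually_at_right_real[OF t(2)]
    by eventually_elim (use t in \<open>auto intro!: slope_mono\<close>)
qed

lemma convex_on_left_deriv_le_slope: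
  assumes dl: "(g has_real_derivative dl) (at_left \<tau>)" and t: "t \<in> I" "\<tau> < t"
  shows "dl \<le> (g t - g \<tau>) / (t - \<tau>)"
proof (rule tendsto_upperbound[OF _ _ trivial_limit_at_left_real])
  show "((\<lambda>y. (g y - g \<tau>) / (y - \<tau>)) \<longlongrightarrow> dl) (at_left \<tau>)"
    using dl by (simp add: has_field_derivative_iff)
  show "eventually (\<lambda>y. (g y - g \<tau>) / (y - \<tau>) \<le> (g t - g \<tau>) / (t - \<tau>)) (at_left \<tau>)"
    using eventually_in_domain(1) by eventually_elim (use t in \<open>auto intro!: slope_mono\<close>)
qed

lemma convex_on_left_deriv_le_right_deriv:
  assumes dl: "(g has_real_derivative dl) (at_left \<tau>)" and dr: "(g has_real_derivative dr) (at_right \<tau>)"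
  shows "dl \<le> dr"
proof (rule tendsto_lowerbound[OF _ _ trivial_limit_at_right_real])
  show "((\<lambda>y. (g y - g \<tau>) / (y - \<tau>)) \<longlongrightarrow> dr) (at_right \<tau>)"
    using dr by (simp add: has_field_derivative_iff)
  show "eventually (\<lambda>y. dl \<le> (g y - g \<tau>) / (y - \<tau>)) (at_right \<tau>)"
    using eventually_in_domain(2) by eventually_elim (auto intro!: convex_on_left_deriv_le_slope[OF dl])
qed

lemma convex_on_above_line_between_one_sided_derivs:
  assumes dl: "(g has_real_derivative dl) (at_left \<tau>)" and dr: "(g has_real_derivative dr) (at_right \<tau>)"
    and s: "dl \<le> s" "s \<le> dr" and t: "t \<in> I"
  shows "g \<tau> + s * (t - \<tau>) \<le> g t"
proof -
  consider "t < \<tau>" | "t = \<tau>" | "\<tau> < t" by linarith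
  then show ?thesis
  proof cases
    case 1
    then have "s * (t - \<tau>) \<le> (g t - g \<tau>) / (t - \<tau>) * (t - \<tau>)"
      using convex_on_slope_le_left_deriv[OF dl t] s by (intro mult_right_mono_neg) auto
    then show ?thesis using 1 by simp
  next
    case 3
    then have "s * (t - \<tau>) \<le> (g t - g \<tau>) / (t - \<tau>) * (t - \<tau>)"
      using convex_on_right_deriv_le_slope[OF dr t] s by (intro mult_right_mono) auto
    then show ?thesis using 3 by simp
  qed simp
qed

end

lemma mono_on_left_deriv_nonneg:
  fixes g :: "real \<Rightarrow> real"
  assumes mono: "mono_on I g" and \<tau>: "\<tau> \<in> interior I"
    and d: "(g has_real_derivative d) (at_left \<tau>)"
  shows "0 \<le> d"
proof (rule tendsto_lowerbound)
  show "((\<lambda>y. (g y - g \<tau>) / (y - \<tau>)) \<longlongrightarrow> d) (at_left \<tau>)"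
    using d by (simp add: has_field_derivative_iff)
  have "eventually (\<lambda>y. y \<in> I \<and> y < \<tau>) (at_left \<tau>)"
    using eventually_nhds_in_nhd[OF \<tau>] unfolding eventually_at_filter by (auto elim: eventually_mono)
  then show "eventually (\<lambda>y. 0 \<le> (g y - g \<tau>) / (y - \<tau>)) (at_left \<tau>)"
  proof eventually_elim
    case (elim y)
    then have "g y \<le> g \<tau>" using mono_onD[OF mono] interior_subset \<tau> by force
    then show ?case using elim by (intro divide_nonpos_neg) auto
  qed
qed simp

lemma mono_on_if_convex_on_above_left_end:
  fixes g :: "real \<Rightarrow> real"
  assumes cvx: "convex_on {a..} g" and above: "\<And>t. a \<le> t \<Longrightarrow> g a \<le> g t"
  shows "mono_on {a..} g"
proof (rule mono_onI)
  fix x y assume xy: "x \<in> {a..}" "y \<in> {a..}" "x \<le> y"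
  show "g x \<le> g y"
  proof (cases "x = y")
    case False
    define w where "w = (x - a) / (y - a)"
    have "a < y" using xy False by simp
    then have w: "0 \<le> w" "w \<le> 1" "w * (y - a) = x - a"
      using xy unfolding w_def by (auto simp: divide_le_eq)
    have "(1 - w) * a + w * y = a + w * (y - a)" by (simp add: algebra_simps)
    also have "\<dots> = x" by (simp add: w(3))
    finally have "(1 - w) * a + w * y = x" .
    have "g ((1 - w) * a + w * y) \<le> (1 - w) * g a + w * g y"
      using convex_onD[OF cvx, of w a y] w(1,2) xy by simp
    then have "g x \<le> (1 - w) * g a + w * g y" by (simp only: \<open>(1 - w) * a + w * y = x\<close>)
    also have "\<dots> \<le> (1 - w) * g y + w * g y"
      using above[of y] xy w by (intro add_right_mono mult_left_mono) auto
    finally show ?thesis by (simp add: algebra_simps)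
  qed simp
qed

section \<open>Gluing convex functions\<close>

lemma convex_on_segment_through_minimum:
  fixes g :: "real \<Rightarrow> real"
  assumes cvx: "convex_on (closed_segment x c) g" and c_xy: "c \<in> closed_segment x y"
    and z: "(1 - u) * x + u * y \<in> closed_segment x c"
    and min: "g c \<le> g x" "g c \<le> g y"
  shows "g ((1 - u) * x + u * y) \<le> (1 - u) * g x + u * g y"
proof -
  obtain w where w: "0 \<le> w" "w \<le> 1" "c = (1 - w) * x + w * y"
    using c_xy by (auto simp: in_segment)
  obtain m where m: "0 \<le> m" "m \<le> 1" "(1 - u) * x + u * y = (1 - m) * x + m * c"
    using z by (auto simp: in_segment)
  show ?thesis
  proof (cases "x = y")
    case False
    have "u * (y - x) = (m * w) * (y - x)" using m(3) w(3) by (simp add: algebra_simps)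
    then have u_eq: "u = m * w" using False by simp
    have "g ((1 - u) * x + u * y) \<le> (1 - m) * g x + m * g c"
      using convex_onD[OF cvx, of m x c] m by (simp add: ends_in_segment)
    also have "\<dots> \<le> (1 - m) * g x + m * ((1 - w) * g x + w * g y)"
    proof -
      have "(1 - w) * g c + w * g c \<le> (1 - w) * g x + w * g y"
        using min w by (intro add_mono mult_left_mono) auto
      then have "g c \<le> (1 - w) * g x + w * g y" by (simp add: algebra_simps)
      then show ?thesis using m by (intro add_left_mono mult_left_mono) auto
    qed
    also have "\<dots> = (1 - u) * g x + u * g y" using u_eq by (simp add: algebra_simps)
    finally show ?thesis .
  qed (simp add: algebra_simps)
qed

lemma convex_on_glue_at_minimum:
  fixes g :: "real \<Rightarrow> real"
  assumes I: "convex I" and c: "c \<in> I"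
    and left: "convex_on {t \<in> I. t \<le> c} g" and right: "convex_on {t \<in> I. c \<le> t} g"
    and min: "\<And>t. t \<in> I \<Longrightarrow> g c \<le> g t"
  shows "convex_on I g"
proof -
  have between: "t \<in> I" if "a \<in> I" "b \<in> I" "a \<le> t" "t \<le> b" for a b t
    using mem_is_interval_1_I[OF _ that] I is_interval_convex_1 by blast
  have half_segment: "convex_on (closed_segment x c) g" if "x \<in> I" for x
  proof (cases "x \<le> c")
    case True
    have "closed_segment x c \<subseteq> {t \<in> I. t \<le> c}"
      using True between[OF that c] by (auto simp: closed_segment_eq_real_ivl)
    then show ?thesis by (rule convex_on_subset[OF left _ convex_closed_segment])
  next
    case False
    have "closed_segment x c \<subseteq> {t \<in> I. c \<le> t}"
      using False between[OF c that] by (auto simp: closed_segment_eq_real_ivl)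
    then show ?thesis by (rule convex_on_subset[OF right _ convex_closed_segment])
  qed
  show ?thesis
  proof (rule convex_onI[OF _ I])
    fix u x y :: real assume u: "0 < u" "u < 1" and x: "x \<in> I" and y: "y \<in> I"
    have z: "(1 - u) * x + u * y \<in> closed_segment x y"
      using u by (auto simp: in_segment intro!: exI[of _ u])
    show "g ((1 - u) *\<^sub>R x + u *\<^sub>R y) \<le> (1 - u) * g x + u * g y"
    proof (cases "c \<in> closed_segment x y")
      case True
      then consider "(1 - u) * x + u * y \<in> closed_segment x c" | "(1 - u) * x + u * y \<in> closed_segment y c"
        using z by (cases "x \<le> y"; cases "(1 - u) * x + u * y \<le> c") (auto simp: closed_segment_eq_real_ivl)
      then show ?thesis
      proof cases
        case 1
        then show ?thesis
          using convex_on_segment_through_minimum[OF half_segment[OF x] True 1 min[OF x] min[OF y]]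
          by simp
      next
        case 2
        have "g ((1 - (1 - u)) * y + (1 - u) * x) \<le> (1 - (1 - u)) * g y + (1 - u) * g x"
          using 2 True by (intro convex_on_segment_through_minimum[OF half_segment[OF y] _ _ min[OF y] min[OF x]])
             (simp_all add: closed_segment_commute algebra_simps)
        then show ?thesis by (simp add: algebra_simps)
      qed
    next
      case False
      then have "closed_segment x y \<subseteq> {t \<in> I. t \<le> c} \<or> closed_segment x y \<subseteq> {t \<in> I. c \<le> t}"
        using between[OF x y] between[OF y x] by (auto simp: closed_segment_eq_real_ivl split: if_splits)
      then have "convex_on (closed_segment x y) g"
        using convex_on_subset[OF left _ convex_closed_segment] convex_on_subset[OF right _ convex_closed_segment] by blast
      then show ?thesis using convex_onD[of "closed_segment x y" g u x y] u by simp
    qed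
  qed
qed

lemma convex_on_cong:
  assumes "convex_on S g" "\<And>x. x \<in> S \<Longrightarrow> h x = g x"
  shows "convex_on S h"
  using assms unfolding convex_on_def by (metis (no_types, lifting) convexD)

lemma convex_on_add_affine:
  fixes g :: "real \<Rightarrow> real"
  assumes "convex_on S g"
  shows "convex_on S (\<lambda>t. g t + k * t + l)"
proof (rule convex_onI)
  fix u x y :: real assume "0 < u" "u < 1" "x \<in> S" "y \<in> S"
  then have "g ((1 - u) * x + u * y) \<le> (1 - u) * g x + u * g y"
    using convex_onD[OF assms, of u x y] by simp
  then show "g ((1 - u) *\<^sub>R x + u *\<^sub>R y) + k * ((1 - u) *\<^sub>R x + u *\<^sub>R y) + l
      \<le> (1 - u) * (g x + k * x + l) + u * (g y + k * y + l)"
    by (simp add: algebra_simps)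
qed (use assms convex_on_imp_convex in blast)

lemma convex_on_glue:
  fixes g :: "real \<Rightarrow> real"
  assumes I: "convex I" and c: "c \<in> I"
    and left: "convex_on {t \<in> I. t \<le> c} g" and right: "convex_on {t \<in> I. c \<le> t} g"
    and support: "\<And>t. t \<in> I \<Longrightarrow> g c + s * (t - c) \<le> g t"
  shows "convex_on I g"
proof -
  have "convex_on I (\<lambda>t. g t + (- s) * t + s * c)"
  proof (rule convex_on_glue_at_minimum[OF I c])
    fix t assume "t \<in> I"
    then show "g c + - s * c + s * c \<le> g t + - s * t + s * c"
      using support[of t] by (simp add: algebra_simps)
  qed (intro convex_on_add_affine left right)+
  then have "convex_on I (\<lambda>t. (g t + (- s) * t + s * c) + s * t + (- s * c))"
    by (rule convex_on_add_affine)
  then show ?thesis by simp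
qed

lemma convex_on_support_minus:
  fixes v w :: "real \<Rightarrow> real"
  assumes cvx: "convex_on I v" and \<tau>: "\<tau> \<in> interior I"
    and dl: "(v has_real_derivative dl) (at_left \<tau>)" and dr: "(v has_real_derivative dr) (at_right \<tau>)"
    and s: "dl \<le> s" "s \<le> dr"
    and right: "\<And>t. t \<in> I \<Longrightarrow> \<tau> \<le> t \<Longrightarrow> w t - w \<tau> \<le> (dr - s) * (t - \<tau>)"
    and left: "\<And>t. t \<in> I \<Longrightarrow> t \<le> \<tau> \<Longrightarrow> w t - w \<tau> \<le> (s - dl) * (\<tau> - t)"
    and t: "t \<in> I"
  shows "v \<tau> - w \<tau> + s * (t - \<tau>) \<le> v t - w t"
proof (cases "\<tau> \<le> t")
  case True
  have "v \<tau> + dr * (t - \<tau>) \<le> v t"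
    using convex_on_above_line_between_one_sided_derivs[OF cvx \<tau> dl dr _ order_refl t]
      convex_on_left_deriv_le_right_deriv[OF cvx \<tau> dl dr] by simp
  then show ?thesis using right[OF t True] by (simp add: algebra_simps)
next
  case False
  have "v \<tau> + dl * (t - \<tau>) \<le> v t"
    using convex_on_above_line_between_one_sided_derivs[OF cvx \<tau> dl dr order_refl _ t]
      convex_on_left_deriv_le_right_deriv[OF cvx \<tau> dl dr] by simp
  then show ?thesis using left[OF t] False by (simp add: algebra_simps)
qed

section \<open>Piecewise affine functions and their breakpoints\<close>

definition affine_off :: "real set \<Rightarrow> (real \<Rightarrow> real) \<Rightarrow> bool" where
  "affine_off S v \<longleftrightarrow> (\<forall>a b. 0 \<le> a \<and> a < b \<and> {a<..<b} \<inter> S = {} \<longrightarrow>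
      (\<exists>c d. \<forall>t\<in>{a..b}. v t = c * t + d))"

lemma Vset_iff: "v \<in> Vset \<longleftrightarrow> continuous_on {0..} v \<and> (\<exists>S. finite S \<and> affine_off S v)"
  unfolding Vset_def affine_off_def by blast

lemma affine_offD:
  assumes "affine_off S v" "0 \<le> a" "a < b" "{a<..<b} \<inter> S = {}"
  obtains c d where "\<And>t. t \<in> {a..b} \<Longrightarrow> v t = c * t + d"
  using assms unfolding affine_off_def by blast

lemma affine_off_DERIV:
  assumes S: "finite S" "affine_off S v" and \<tau>: "0 < \<tau>" "\<tau> \<notin> S"
  obtains c where "(v has_real_derivative c) (at \<tau>)"
proof -
  obtain e where e: "0 < e" "\<And>s. s \<in> S \<Longrightarrow> e \<le> dist \<tau> s"
    using finite_set_avoid[OF S(1), of \<tau>] \<tau>(2) by metis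
  define r where "r = min e \<tau> / 2"
  have r: "0 < r" "r < \<tau>" "r < e" using e \<tau> unfolding r_def by auto
  have "{\<tau> - r<..<\<tau> + r} \<inter> S = {}"
    using e(2) r by (force simp: dist_real_def)
  then obtain c d where cd: "\<And>t. t \<in> {\<tau> - r..\<tau> + r} \<Longrightarrow> v t = c * t + d"
    using affine_offD[OF S(2), of "\<tau> - r" "\<tau> + r"] r by auto
  have "((\<lambda>t. c * t + d) has_real_derivative c) (at \<tau>)"
    by (auto intro!: derivative_eq_intros)
  then have "(v has_real_derivative c) (at \<tau>)"
    by (rule has_field_derivative_transform_within_open[of _ _ _ "{\<tau> - r<..<\<tau> + r}"])
       (use r cd in auto)
  then show ?thesis by (rule that)
qed

lemma not_breakpoint_if_DERIV:
  assumes "(v has_real_derivative d) (at \<tau>)"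
  shows "\<tau> \<notin> breakpoints v"
proof
  assume "\<tau> \<in> breakpoints v"
  then obtain d1 d2 where "(v has_real_derivative d1) (at_left \<tau>)"
      "(v has_real_derivative d2) (at_right \<tau>)" "d1 \<noteq> d2"
    unfolding breakpoints_def by blast
  moreover have "(v has_real_derivative d) (at_left \<tau>)" "(v has_real_derivative d) (at_right \<tau>)"
    using assms by (auto intro: has_field_derivative_at_within)
  ultimately show False
    using has_field_derivative_unique trivial_limit_at_left_real trivial_limit_at_right_real by metis
qed

lemma breakpoints_add_DERIV:
  assumes w: "(w has_real_derivative d) (at \<tau>)" and \<tau>: "\<tau> \<in> breakpoints (\<lambda>t. v t + w t)"
  shows "\<tau> \<in> breakpoints v"
proof -
  obtain d1 d2 where pos: "0 < \<tau>" and d1: "((\<lambda>t. v t + w t) has_real_derivative d1) (at_left \<tau>)"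
      and d2: "((\<lambda>t. v t + w t) has_real_derivative d2) (at_right \<tau>)" and ne: "d1 \<noteq> d2"
    using \<tau> unfolding breakpoints_def by blast
  have "((\<lambda>t. (v t + w t) - w t) has_real_derivative d1 - d) (at_left \<tau>)"
    using d1 has_field_derivative_at_within[OF w] by (rule DERIV_diff)
  moreover have "((\<lambda>t. (v t + w t) - w t) has_real_derivative d2 - d) (at_right \<tau>)"
    using d2 has_field_derivative_at_within[OF w] by (rule DERIV_diff)
  ultimately show ?thesis using pos ne unfolding breakpoints_def
    by (intro CollectI conjI exI[of _ "d1 - d"] exI[of _ "d2 - d"]) auto
qed

lemma breakpoints_subset_if_affine_off:
  assumes "finite S" "affine_off S v"
  shows "breakpoints v \<subseteq> S"
proof
  fix \<tau> assume \<tau>: "\<tau> \<in> breakpoints v"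
  show "\<tau> \<in> S"
  proof (rule ccontr)
    assume "\<tau> \<notin> S"
    moreover have "0 < \<tau>" using \<tau> unfolding breakpoints_def by blast
    ultimately obtain c where "(v has_real_derivative c) (at \<tau>)"
      using affine_off_DERIV[OF assms] by blast
    then show False using \<tau> not_breakpoint_if_DERIV by blast
  qed
qed

lemma Vset_finite_breakpoints: "v \<in> Vset \<Longrightarrow> finite (breakpoints v)"
  unfolding Vset_iff using breakpoints_subset_if_affine_off finite_subset by metis

lemma Vset_add_scaled:
  assumes v: "v \<in> Vset" and w: "w \<in> Vset"
  shows "(\<lambda>t. v t + k * w t + l) \<in> Vset"
proof -
  obtain S T where S: "finite S" "affine_off S v" and T: "finite T" "affine_off T w"
    using v w unfolding Vset_iff by blast
  have "affine_off (S \<union> T) (\<lambda>t. v t + k * w t + l)"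
    unfolding affine_off_def
  proof (intro allI impI)
    fix a b assume ab: "0 \<le> a \<and> a < b \<and> {a<..<b} \<inter> (S \<union> T) = {}"
    obtain c d c' d' where "\<And>t. t \<in> {a..b} \<Longrightarrow> v t = c * t + d" "\<And>t. t \<in> {a..b} \<Longrightarrow> w t = c' * t + d'"
      using affine_offD[OF S(2), of a b] affine_offD[OF T(2), of a b] ab by (metis Int_Un_distrib Un_empty)
    then show "\<exists>c d. \<forall>t\<in>{a..b}. v t + k * w t + l = c * t + d"
      by (intro exI[of _ "c + k * c'"] exI[of _ "d + k * d' + l"]) (auto simp: algebra_simps)
  qed
  moreover have "continuous_on {0..} (\<lambda>t. v t + k * w t + l)"
    using v w unfolding Vset_def by (auto intro!: continuous_intros)
  ultimately show ?thesis using S T unfolding Vset_iff by blast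
qed

lemma Vset_add_const: "v \<in> Vset \<Longrightarrow> (\<lambda>t. v t + l) \<in> Vset"
  using Vset_add_scaled[of v v 0 l] by simp

lemma breakpoints_add_const: "breakpoints (\<lambda>t. v t + l) \<subseteq> breakpoints v"
  using breakpoints_add_DERIV[OF DERIV_const] by blast

section \<open>The tent function\<close>

definition tent :: "real \<Rightarrow> real \<Rightarrow> real \<Rightarrow> real \<Rightarrow> real" where
  "tent a b c t = max 0 (min ((t - a) / (b - a)) ((c - t) / (c - b)))"

context
  fixes a b c :: real
  assumes abc: "a < b" "b < c"
begin

lemma tent_nonneg: "0 \<le> tent a b c t"
  unfolding tent_def by simp

lemma tent_le_left: "a \<le> t \<Longrightarrow> tent a b c t \<le> (t - a) / (b - a)"
  unfolding tent_def using abc by auto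

lemma tent_le_right: "t \<le> c \<Longrightarrow> tent a b c t \<le> (c - t) / (c - b)"
  unfolding tent_def using abc by auto

lemma tent_le_one: "tent a b c t \<le> 1"
proof (cases "t \<le> b")
  case True
  then have "(t - a) / (b - a) \<le> 1" using abc by (simp add: divide_le_eq)
  then show ?thesis unfolding tent_def by simp
next
  case False
  then have "(c - t) / (c - b) \<le> 1" using abc by (simp add: divide_le_eq)
  then show ?thesis unfolding tent_def by simp
qed

lemma tent_apex: "tent a b c b = 1"
  unfolding tent_def using abc by simp

lemma tent_eq_0: "t \<le> a \<or> c \<le> t \<Longrightarrow> tent a b c t = 0"
proof -
  assume "t \<le> a \<or> c \<le> t"
  then have "(t - a) / (b - a) \<le> 0 \<or> (c - t) / (c - b) \<le> 0" using abc by (auto simp: divide_le_0_iff)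
  then show ?thesis unfolding tent_def by auto
qed

lemma tent_rising: "a \<le> t \<Longrightarrow> t \<le> b \<Longrightarrow> tent a b c t = (t - a) / (b - a)"
proof -
  assume t: "a \<le> t" "t \<le> b"
  have "(t - a) / (b - a) \<le> 1" "1 \<le> (c - t) / (c - b)" "0 \<le> (t - a) / (b - a)"
    using abc t by (simp_all add: divide_le_eq le_divide_eq)
  then show ?thesis unfolding tent_def by simp
qed

lemma tent_falling: "b \<le> t \<Longrightarrow> t \<le> c \<Longrightarrow> tent a b c t = (c - t) / (c - b)"
proof -
  assume t: "b \<le> t" "t \<le> c"
  have "(c - t) / (c - b) \<le> 1" "1 \<le> (t - a) / (b - a)" "0 \<le> (c - t) / (c - b)"
    using abc t by (simp_all add: divide_le_eq le_divide_eq)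
  then show ?thesis unfolding tent_def by simp
qed

lemma tent_pos: "a < t \<Longrightarrow> t < c \<Longrightarrow> 0 < tent a b c t"
  unfolding tent_def using abc by auto

lemma continuous_on_tent: "continuous_on S (tent a b c)"
  unfolding tent_def by (intro continuous_intros) (use abc in auto)

lemma tent_affine_on:
  assumes pq: "p < q" and avoid: "{p<..<q} \<inter> {a, b, c} = {}"
  obtains k l where "\<And>t. t \<in> {p..q} \<Longrightarrow> tent a b c t = k * t + l"
proof -
  have outside: "z \<le> p \<or> q \<le> z" if "z \<in> {a, b, c}" for z
    using avoid that by auto
  consider "q \<le> a \<or> c \<le> p" | "a \<le> p" "q \<le> b" | "b \<le> p" "q \<le> c"
    using outside[of a] outside[of b] outside[of c] abc pq by fastforce
  then show ?thesis
  proof cases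
    case 1
    have "tent a b c t = 0 * t + 0" if "t \<in> {p..q}" for t
      using that 1 tent_eq_0[of t] by force
    then show ?thesis by (rule that)
  next
    case 2
    have "tent a b c t = (1 / (b - a)) * t + (- a / (b - a))" if "t \<in> {p..q}" for t
      using that 2 tent_rising[of t] by (simp add: diff_divide_distrib)
    then show ?thesis by (rule that)
  next
    case 3
    have "tent a b c t = (- 1 / (c - b)) * t + c / (c - b)" if "t \<in> {p..q}" for t
      using that 3 tent_falling[of t] by (simp add: diff_divide_distrib)
    then show ?thesis by (rule that)
  qed
qed

lemma affine_off_tent: "affine_off {a, b, c} (tent a b c)"
  unfolding affine_off_def using tent_affine_on by metis

lemma tent_in_Vset: "tent a b c \<in> Vset"
  unfolding Vset_iff using affine_off_tent continuous_on_tent by (intro conjI exI[of _ "{a, b, c}"]) auto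

lemma tent_scaled_le_left:
  assumes "0 \<le> \<epsilon>" "\<epsilon> \<le> \<delta> * (b - a)" "a \<le> t"
  shows "\<epsilon> * tent a b c t \<le> \<delta> * (t - a)"
proof -
  have "\<epsilon> * tent a b c t \<le> \<epsilon> * ((t - a) / (b - a))"
    using tent_le_left[OF assms(3)] assms(1) by (rule mult_left_mono)
  also have "\<dots> = (\<epsilon> / (b - a)) * (t - a)" by simp
  also have "\<dots> \<le> \<delta> * (t - a)"
    using assms abc by (intro mult_right_mono) (simp_all add: pos_divide_le_eq)
  finally show ?thesis .
qed

lemma tent_scaled_le_right:
  assumes "0 \<le> \<epsilon>" "\<epsilon> \<le> \<delta> * (c - b)" "t \<le> c"
  shows "\<epsilon> * tent a b c t \<le> \<delta> * (c - t)"
proof -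
  have "\<epsilon> * tent a b c t \<le> \<epsilon> * ((c - t) / (c - b))"
    using tent_le_right[OF assms(3)] assms(1) by (rule mult_left_mono)
  also have "\<dots> = (\<epsilon> / (c - b)) * (c - t)" by simp
  also have "\<dots> \<le> \<delta> * (c - t)"
    using assms abc by (intro mult_right_mono) (simp_all add: pos_divide_le_eq)
  finally show ?thesis .
qed

end

section \<open>Exponential integrals against the base measure\<close>

lemma base_density_measurable:
  assumes "standing_assumptions f"
  shows "(\<lambda>x. ennreal (f x * indicator {0..} x)) \<in> borel_measurable lborel"
proof -
  have "continuous_on {0..} f" using assms unfolding standing_assumptions_def by blast
  then have "(\<lambda>x. indicator {0..} x *\<^sub>R f x) \<in> borel_measurable borel"
    by (intro borel_measurable_continuous_on_indicator) simp_all
  then show ?thesis by (simp add: mult.commute measurable_lborel1)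
qed

lemma sets_base_measure [measurable_cong]: "sets (base_measure f) = sets borel"
  unfolding base_measure_def by simp

lemma AE_base_measure_nonneg:
  assumes "standing_assumptions f"
  shows "AE t in base_measure f. 0 \<le> t"
  unfolding base_measure_def
  by (subst AE_density[OF base_density_measurable[OF assms]]) (auto simp: indicator_def)

text \<open>Members of Vset are only constrained on the half-line and need not be Borel measurable;
  composing with max 0 gives a measurable function with the same integral.\<close>

lemma nn_integral_base_measure_max0:
  assumes "standing_assumptions f"
  shows "(\<integral>\<^sup>+t. u t \<partial>base_measure f) = (\<integral>\<^sup>+t. u (max 0 t) \<partial>base_measure f)"
  by (rule nn_integral_cong_AE) (use AE_base_measure_nonneg[OF assms] in \<open>auto elim: eventually_mono\<close>)

lemma nn_integral_base_measure_pos: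
  assumes f: "standing_assumptions f" and g: "g \<in> borel_measurable borel"
    and ab: "0 \<le> a" "a < b" and pos: "\<And>t. t \<in> {a<..<b} \<Longrightarrow> 0 < g t"
  shows "(\<integral>\<^sup>+t. ennreal (g t) \<partial>base_measure f) \<noteq> 0"
proof
  assume "(\<integral>\<^sup>+t. ennreal (g t) \<partial>base_measure f) = 0"
  then have "(\<integral>\<^sup>+t. ennreal (f t * indicator {0..} t) * ennreal (g t) \<partial>lborel) = 0"
    unfolding base_measure_def using base_density_measurable[OF f] g
    by (subst (asm) nn_integral_density) (auto simp: measurable_lborel1)
  then have "AE t in lborel. ennreal (f t * indicator {0..} t) * ennreal (g t) = 0"
    using base_density_measurable[OF f] g by (subst (asm) nn_integral_0_iff_AE) (auto simp: measurable_lborel1)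
  then have "AE t in lborel. t \<notin> {a<..<b}"
  proof (rule eventually_mono)
    fix t assume zero: "ennreal (f t * indicator {0..} t) * ennreal (g t) = 0"
    show "t \<notin> {a<..<b}"
    proof
      assume t: "t \<in> {a<..<b}"
      then have "0 < f t" using f ab unfolding standing_assumptions_def by auto
      then show False using zero t ab pos[OF t] by (auto simp: indicator_def)
    qed
  qed
  then have "{a<..<b} \<in> null_sets lborel" by (subst AE_iff_null_sets) auto
  then show False using ab by auto
qed

lemma borel_measurable_max0:
  fixes v :: "real \<Rightarrow> real"
  assumes "continuous_on {0..} v"
  shows "(\<lambda>t. v (max 0 t)) \<in> borel_measurable borel"
proof (rule borel_measurable_continuous_onI)
  show "continuous_on UNIV (\<lambda>t. v (max 0 t))"
    by (rule continuous_on_compose2[OF assms]) (auto intro: continuous_intros)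
qed

lemma nn_integral_exp_pos:
  assumes f: "standing_assumptions f" and v: "continuous_on {0..} v"
  shows "(\<integral>\<^sup>+t. ennreal (exp (v t)) \<partial>base_measure f) \<noteq> 0"
  unfolding nn_integral_base_measure_max0[OF f, of "\<lambda>t. ennreal (exp (v t))"]
proof (rule nn_integral_base_measure_pos[OF f _ order_refl zero_less_one])
  show "(\<lambda>t. exp (v (max 0 t))) \<in> borel_measurable borel"
    using borel_measurable_max0[OF v] by measurable
qed simp

lemma nn_integral_exp_add_const:
  assumes f: "standing_assumptions f" and v: "continuous_on {0..} v"
  shows "(\<integral>\<^sup>+t. ennreal (exp (v t + l)) \<partial>base_measure f)
    = (\<integral>\<^sup>+t. ennreal (exp (v t)) \<partial>base_measure f) * ennreal (exp l)"
proof -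
  have meas: "(\<lambda>t. ennreal (exp (v (max 0 t)))) \<in> borel_measurable (base_measure f)"
    using borel_measurable_max0[OF v] by measurable
  show ?thesis
    unfolding nn_integral_base_measure_max0[OF f, of "\<lambda>t. ennreal (exp (v t + l))"]
      nn_integral_base_measure_max0[OF f, of "\<lambda>t. ennreal (exp (v t))"]
    by (subst nn_integral_multc[OF meas, symmetric]) (simp add: exp_add ennreal_mult)
qed

lemma nn_integral_exp_less:
  assumes f: "standing_assumptions f"
    and v: "continuous_on {0..} v" and w: "continuous_on {0..} w"
    and le: "\<And>t. 0 \<le> t \<Longrightarrow> v t \<le> w t"
    and ab: "0 \<le> a" "a < b" and less: "\<And>t. t \<in> {a<..<b} \<Longrightarrow> v t < w t"
    and finite: "(\<integral>\<^sup>+t. ennreal (exp (w t)) \<partial>base_measure f) < \<infinity>"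
  shows "(\<integral>\<^sup>+t. ennreal (exp (v t)) \<partial>base_measure f) < (\<integral>\<^sup>+t. ennreal (exp (w t)) \<partial>base_measure f)"
proof -
  let ?M = "base_measure f"
  define v0 w0 where "v0 t = v (max 0 t)" and "w0 t = w (max 0 t)" for t
  have [measurable]: "v0 \<in> borel_measurable borel" "w0 \<in> borel_measurable borel"
    unfolding v0_def w0_def using borel_measurable_max0 v w by blast+
  have "(\<integral>\<^sup>+t. ennreal (exp (w0 t)) \<partial>?M)
      = (\<integral>\<^sup>+t. ennreal (exp (v0 t)) + ennreal (exp (w0 t) - exp (v0 t)) \<partial>?M)"
    using le by (intro nn_integral_cong) (simp add: v0_def w0_def flip: ennreal_plus)
  also have "\<dots> = (\<integral>\<^sup>+t. ennreal (exp (v0 t)) \<partial>?M) + (\<integral>\<^sup>+t. ennreal (exp (w0 t) - exp (v0 t)) \<partial>?M)"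
    by (rule nn_integral_add) simp_all
  finally have split: "(\<integral>\<^sup>+t. ennreal (exp (w0 t)) \<partial>?M)
      = (\<integral>\<^sup>+t. ennreal (exp (v0 t)) \<partial>?M) + (\<integral>\<^sup>+t. ennreal (exp (w0 t) - exp (v0 t)) \<partial>?M)" .
  have gap: "(\<integral>\<^sup>+t. ennreal (exp (w0 t) - exp (v0 t)) \<partial>?M) \<noteq> 0"
  proof (rule nn_integral_base_measure_pos[OF f _ ab])
    show "(\<lambda>t. exp (w0 t) - exp (v0 t)) \<in> borel_measurable borel" by measurable
  qed (use less ab in \<open>auto simp: v0_def w0_def\<close>)
  have "(\<integral>\<^sup>+t. ennreal (exp (w0 t)) \<partial>?M) < \<infinity>"
    using finite unfolding nn_integral_base_measure_max0[OF f, of "\<lambda>t. ennreal (exp (w t))"] w0_def .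
  then have "(\<integral>\<^sup>+t. ennreal (exp (v0 t)) \<partial>?M) + 0 < (\<integral>\<^sup>+t. ennreal (exp (w0 t)) \<partial>?M)"
    unfolding split using gap by (subst ennreal_add_left_cancel_less) (auto simp: zero_less_iff_neq_zero)
  then show ?thesis
    unfolding nn_integral_base_measure_max0[OF f, of "\<lambda>t. ennreal (exp (v t))"]
      nn_integral_base_measure_max0[OF f, of "\<lambda>t. ennreal (exp (w t))"] v0_def w0_def
    by simp
qed

lemma Lfun_normalized:
  assumes "(\<integral>\<^sup>+t. ennreal (exp (v t)) \<partial>base_measure f) = 1"
  shows "Lfun f x n v = ereal ((1 / real n) * (\<Sum>k=1..n. v (x k)))"
  using assms unfolding Lfun_def by (simp add: one_ennreal.rep_eq one_ereal_def)

section \<open>Lowering three breakpoints by a tent\<close>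

context
  fixes v :: "real \<Rightarrow> real" and \<tau>1 \<tau>2 \<tau>3 \<epsilon> :: real
  assumes cvx: "convex_on {0..} v" and \<tau>: "0 < \<tau>1" "\<tau>1 < \<tau>2" "\<tau>2 < \<tau>3" and \<epsilon>: "0 \<le> \<epsilon>"
begin

lemma minus_tent_support_left_end:
  assumes d: "(v has_real_derivative d1) (at_left \<tau>1)" "(v has_real_derivative d2) (at_right \<tau>1)"
    and small: "\<epsilon> \<le> (d2 - d1) * (\<tau>2 - \<tau>1)" and t: "0 \<le> t"
  shows "v \<tau>1 + d1 * (t - \<tau>1) \<le> v t - \<epsilon> * tent \<tau>1 \<tau>2 \<tau>3 t"
proof -
  have abc: "\<tau>1 < \<tau>2" "\<tau>2 < \<tau>3" using \<tau> by auto
  have "v \<tau>1 - \<epsilon> * tent \<tau>1 \<tau>2 \<tau>3 \<tau>1 + d1 * (t - \<tau>1) \<le> v t - \<epsilon> * tent \<tau>1 \<tau>2 \<tau>3 t"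
    using tent_scaled_le_left[OF abc \<epsilon> small] tent_eq_0[OF abc] \<tau> t
      convex_on_left_deriv_le_right_deriv[OF cvx _ d]
    by (intro convex_on_support_minus[OF cvx _ d]) auto
  then show ?thesis using tent_eq_0[OF abc, of \<tau>1] by simp
qed

lemma minus_tent_support_apex:
  assumes s: "(v has_real_derivative s1) (at_left \<tau>2)" "(v has_real_derivative s2) (at_right \<tau>2)"
    and t: "0 \<le> t"
  shows "v \<tau>2 - \<epsilon> + s1 * (t - \<tau>2) \<le> v t - \<epsilon> * tent \<tau>1 \<tau>2 \<tau>3 t"
proof -
  have abc: "\<tau>1 < \<tau>2" "\<tau>2 < \<tau>3" using \<tau> by auto
  have int: "\<tau>2 \<in> interior {0..}" using \<tau> by simp
  have below_apex: "\<epsilon> * tent \<tau>1 \<tau>2 \<tau>3 u - \<epsilon> * tent \<tau>1 \<tau>2 \<tau>3 \<tau>2 \<le> 0" for u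
    using tent_le_one[OF abc, of u] tent_apex[OF abc] \<epsilon> by (simp add: mult_left_le)
  have "v \<tau>2 - \<epsilon> * tent \<tau>1 \<tau>2 \<tau>3 \<tau>2 + s1 * (t - \<tau>2) \<le> v t - \<epsilon> * tent \<tau>1 \<tau>2 \<tau>3 t"
  proof (rule convex_on_support_minus[OF cvx int s order_refl])
    show "\<epsilon> * tent \<tau>1 \<tau>2 \<tau>3 u - \<epsilon> * tent \<tau>1 \<tau>2 \<tau>3 \<tau>2 \<le> (s2 - s1) * (u - \<tau>2)"
      if "\<tau>2 \<le> u" for u
      using below_apex[of u] that convex_on_left_deriv_le_right_deriv[OF cvx int s]
      by (smt (verit) mult_nonneg_nonneg)
    show "\<epsilon> * tent \<tau>1 \<tau>2 \<tau>3 u - \<epsilon> * tent \<tau>1 \<tau>2 \<tau>3 \<tau>2 \<le> (s1 - s1) * (\<tau>2 - u)" for u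
      using below_apex[of u] by simp
  qed (use t convex_on_left_deriv_le_right_deriv[OF cvx int s] in auto)
  then show ?thesis using tent_apex[OF abc] by simp
qed

lemma minus_tent_support_right_end:
  assumes e: "(v has_real_derivative e1) (at_left \<tau>3)" "(v has_real_derivative e2) (at_right \<tau>3)"
    and small: "\<epsilon> \<le> (e2 - e1) * (\<tau>3 - \<tau>2)" and t: "0 \<le> t"
  shows "v \<tau>3 + e2 * (t - \<tau>3) \<le> v t - \<epsilon> * tent \<tau>1 \<tau>2 \<tau>3 t"
proof -
  have abc: "\<tau>1 < \<tau>2" "\<tau>2 < \<tau>3" using \<tau> by auto
  have "v \<tau>3 - \<epsilon> * tent \<tau>1 \<tau>2 \<tau>3 \<tau>3 + e2 * (t - \<tau>3) \<le> v t - \<epsilon> * tent \<tau>1 \<tau>2 \<tau>3 t"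
    using tent_scaled_le_right[OF abc \<epsilon> small] tent_eq_0[OF abc] \<tau> t
      convex_on_left_deriv_le_right_deriv[OF cvx _ e]
    by (intro convex_on_support_minus[OF cvx _ e]) auto
  then show ?thesis using tent_eq_0[OF abc, of \<tau>3] by simp
qed

lemma convex_on_minus_tent:
  assumes d: "(v has_real_derivative d1) (at_left \<tau>1)" "(v has_real_derivative d2) (at_right \<tau>1)"
    and s: "(v has_real_derivative s1) (at_left \<tau>2)" "(v has_real_derivative s2) (at_right \<tau>2)"
    and e: "(v has_real_derivative e1) (at_left \<tau>3)" "(v has_real_derivative e2) (at_right \<tau>3)"
    and small: "\<epsilon> \<le> (d2 - d1) * (\<tau>2 - \<tau>1)" "\<epsilon> \<le> (e2 - e1) * (\<tau>3 - \<tau>2)"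
  shows "convex_on {0..} (\<lambda>t. v t - \<epsilon> * tent \<tau>1 \<tau>2 \<tau>3 t)"
proof -
  define g where "g t = v t - \<epsilon> * tent \<tau>1 \<tau>2 \<tau>3 t" for t
  have abc: "\<tau>1 < \<tau>2" "\<tau>2 < \<tau>3" using \<tau> by auto
  have at_ends: "g \<tau>1 = v \<tau>1" "g \<tau>3 = v \<tau>3" and at_apex: "g \<tau>2 = v \<tau>2 - \<epsilon>"
    using tent_eq_0[OF abc] tent_apex[OF abc] by (simp_all add: g_def)
  have piece: "convex_on {p..q} g" if pq: "0 \<le> p" "p < q" "{p<..<q} \<inter> {\<tau>1, \<tau>2, \<tau>3} = {}" for p q
  proof -
    obtain k l where kl: "\<And>t. t \<in> {p..q} \<Longrightarrow> tent \<tau>1 \<tau>2 \<tau>3 t = k * t + l"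
      using tent_affine_on[OF abc pq(2,3)] by blast
    have "convex_on {p..q} (\<lambda>t. v t + (- \<epsilon> * k) * t + (- \<epsilon> * l))"
      using convex_on_subset[OF cvx] pq(1) by (intro convex_on_add_affine) auto
    then show ?thesis by (rule convex_on_cong) (simp add: g_def kl algebra_simps)
  qed
  have glue: "convex_on I g"
    if "convex I" "c \<in> I" "{t \<in> I. t \<le> c} = L" "{t \<in> I. c \<le> t} = R"
      "convex_on L g" "convex_on R g" "\<And>t. t \<in> I \<Longrightarrow> g c + k * (t - c) \<le> g t" for I c L R k
    using convex_on_glue[of I c g k] that by simp
  have "convex_on {0..\<tau>2} g"
  proof (rule glue)
    show "{t \<in> {0..\<tau>2}. t \<le> \<tau>1} = {0..\<tau>1}" "{t \<in> {0..\<tau>2}. \<tau>1 \<le> t} = {\<tau>1..\<tau>2}"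
      using \<tau> by auto
    show "convex_on {0..\<tau>1} g" "convex_on {\<tau>1..\<tau>2} g"
      using \<tau> by (auto intro!: piece)
    show "g \<tau>1 + d1 * (t - \<tau>1) \<le> g t" if "t \<in> {0..\<tau>2}" for t
      using minus_tent_support_left_end[OF d small(1), of t] that unfolding at_ends by (simp add: g_def)
  qed (use \<tau> in auto)
  moreover have "convex_on {\<tau>2..\<tau>3} g"
    using \<tau> by (auto intro!: piece)
  ultimately have "convex_on {0..\<tau>3} g"
  proof (rule glue[rotated 4])
    show "{t \<in> {0..\<tau>3}. t \<le> \<tau>2} = {0..\<tau>2}" "{t \<in> {0..\<tau>3}. \<tau>2 \<le> t} = {\<tau>2..\<tau>3}"
      using \<tau> by auto
    show "g \<tau>2 + s1 * (t - \<tau>2) \<le> g t" if "t \<in> {0..\<tau>3}" for t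
      using minus_tent_support_apex[OF s, of t] that unfolding at_apex by (simp add: g_def)
  qed (use \<tau> in auto)
  moreover have "convex_on {\<tau>3..} g"
    using \<tau> tent_eq_0[OF abc] by (intro convex_on_cong[OF convex_on_subset[OF cvx]]) (auto simp: g_def)
  ultimately have "convex_on {0..} g"
  proof (rule glue[rotated 4])
    show "{t \<in> {0..}. t \<le> \<tau>3} = {0..\<tau>3}" "{t \<in> {0..}. \<tau>3 \<le> t} = {\<tau>3..}"
      using \<tau> by auto
    show "g \<tau>3 + e2 * (t - \<tau>3) \<le> g t" if "t \<in> {0..}" for t
      using minus_tent_support_right_end[OF e small(2), of t] that unfolding at_ends by (simp add: g_def)
  qed (use \<tau> in auto)
  then show ?thesis unfolding g_def .
qed

end

lemma convex_mono_minus_tent: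
  fixes v :: "real \<Rightarrow> real"
  assumes cvx: "convex_on {0..} v" and mono: "mono_on {0..} v"
    and \<tau>: "0 < \<tau>1" "\<tau>1 < \<tau>2" "\<tau>2 < \<tau>3"
    and bp: "\<tau>1 \<in> breakpoints v" "\<tau>2 \<in> breakpoints v" "\<tau>3 \<in> breakpoints v"
  obtains \<epsilon> where "0 < \<epsilon>"
    "convex_on {0..} (\<lambda>t. v t - \<epsilon> * tent \<tau>1 \<tau>2 \<tau>3 t)"
    "mono_on {0..} (\<lambda>t. v t - \<epsilon> * tent \<tau>1 \<tau>2 \<tau>3 t)"
proof -
  have abc: "\<tau>1 < \<tau>2" "\<tau>2 < \<tau>3" using \<tau> by auto
  have int: "\<tau> \<in> interior {0..}" if "0 < \<tau>" for \<tau> :: real using that by simp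
  obtain d1 d2 s1 s2 e1 e2 where
      d: "(v has_real_derivative d1) (at_left \<tau>1)" "(v has_real_derivative d2) (at_right \<tau>1)" "d1 \<noteq> d2"
    and s: "(v has_real_derivative s1) (at_left \<tau>2)" "(v has_real_derivative s2) (at_right \<tau>2)"
    and e: "(v has_real_derivative e1) (at_left \<tau>3)" "(v has_real_derivative e2) (at_right \<tau>3)" "e1 \<noteq> e2"
    using bp unfolding breakpoints_def by blast
  have kinks: "d1 < d2" "e1 < e2"
    using convex_on_left_deriv_le_right_deriv[OF cvx int d(1,2)]
      convex_on_left_deriv_le_right_deriv[OF cvx int e(1,2)] d(3) e(3) \<tau> by auto
  (* \<epsilon>/(\<tau>2 - \<tau>1) and \<epsilon>/(\<tau>3 - \<tau>2) are the slope changes that the tent causes at \<tau>1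
     and \<tau>3; they must not exceed the kinks d2 - d1 and e2 - e1 of v there. *)
  define \<epsilon> where "\<epsilon> = min ((d2 - d1) * (\<tau>2 - \<tau>1)) ((e2 - e1) * (\<tau>3 - \<tau>2))"
  have \<epsilon>: "0 < \<epsilon>" "\<epsilon> \<le> (d2 - d1) * (\<tau>2 - \<tau>1)" "\<epsilon> \<le> (e2 - e1) * (\<tau>3 - \<tau>2)"
    using kinks \<tau> unfolding \<epsilon>_def by auto
  define g where "g t = v t - \<epsilon> * tent \<tau>1 \<tau>2 \<tau>3 t" for t
  have cvx_g: "convex_on {0..} g"
    unfolding g_def using convex_on_minus_tent[OF cvx \<tau> _ d(1,2) s e(1,2) \<epsilon>(2,3)] \<epsilon>(1) by simp
  have left_part: "g t = v t" if "t \<le> \<tau>1" for t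
    using tent_eq_0[OF abc] that by (simp add: g_def)
  have "g 0 \<le> g t" if "0 \<le> t" for t
  proof (cases "t \<le> \<tau>1")
    case True
    then show ?thesis using that left_part \<tau> mono_onD[OF mono] by simp
  next
    case False
    have "g 0 \<le> g \<tau>1" using left_part \<tau> mono_onD[OF mono] by simp
    also have "\<dots> \<le> g \<tau>1 + d1 * (t - \<tau>1)"
      using mono_on_left_deriv_nonneg[OF mono int d(1)] \<tau> False by simp
    also have "\<dots> \<le> g t"
      using minus_tent_support_left_end[OF cvx \<tau> _ d(1,2) \<epsilon>(2) that] \<epsilon>(1) left_part[of \<tau>1]
      by (simp add: g_def)
    finally show ?thesis .
  qed
  then have "mono_on {0..} g" by (intro mono_on_if_convex_on_above_left_end[OF cvx_g]) simp
  then show ?thesis using that[OF \<epsilon>(1)] cvx_g unfolding g_def by blast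
qed

lemma breakpoints_minus_tent:
  assumes abc: "a < b" "b < c" and bp: "a \<in> breakpoints v" "b \<in> breakpoints v" "c \<in> breakpoints v"
  shows "breakpoints (\<lambda>t. v t - \<epsilon> * tent a b c t) \<subseteq> breakpoints v"
proof
  fix \<tau> assume \<tau>: "\<tau> \<in> breakpoints (\<lambda>t. v t - \<epsilon> * tent a b c t)"
  show "\<tau> \<in> breakpoints v"
  proof (cases "\<tau> \<in> {a, b, c}")
    case False
    have "0 < \<tau>" using \<tau> unfolding breakpoints_def by blast
    then obtain d where "(tent a b c has_real_derivative d) (at \<tau>)"
      using affine_off_DERIV[OF _ affine_off_tent[OF abc]] False by blast
    then have "((\<lambda>t. - \<epsilon> * tent a b c t) has_real_derivative - \<epsilon> * d) (at \<tau>)"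
      by (auto intro!: derivative_eq_intros)
    moreover have "\<tau> \<in> breakpoints (\<lambda>t. v t + - \<epsilon> * tent a b c t)" using \<tau> by simp
    ultimately show ?thesis by (rule breakpoints_add_DERIV)
  qed (use bp in auto)
qed

lemma normalize_into_Theta1:
  assumes f: "standing_assumptions f" and g: "g \<in> Vset \<inter> Theta"
    and r: "(\<integral>\<^sup>+t. ennreal (exp (g t)) \<partial>base_measure f) = ennreal r" "0 < r"
  shows "(\<lambda>t. g t - ln r) \<in> Vset \<inter> Theta1 f"
proof -
  have cvx: "convex_on {0..} g" and mono: "mono_on {0..} g" and cont: "continuous_on {0..} g"
    using g unfolding Theta_def Vset_def by auto
  have "(\<lambda>t. g t + (- ln r)) \<in> Vset" using g by (intro Vset_add_const) simp
  moreover have "convex_on {0..} (\<lambda>t. g t + 0 * t + (- ln r))"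
    by (rule convex_on_add_affine[OF cvx])
  moreover have "mono_on {0..} (\<lambda>t. g t - ln r)"
    using mono by (auto simp: mono_on_def)
  moreover have "(\<integral>\<^sup>+t. ennreal (exp (g t + (- ln r))) \<partial>base_measure f) = 1"
    unfolding nn_integral_exp_add_const[OF f cont] using r by (simp add: exp_minus flip: ennreal_mult)
  ultimately show ?thesis unfolding Theta1_def Theta_def by simp
qed

lemma nn_integral_exp_minus_tent:
  assumes f: "standing_assumptions f" and v: "continuous_on {0..} v"
    and one: "(\<integral>\<^sup>+t. ennreal (exp (v t)) \<partial>base_measure f) = 1"
    and \<tau>: "0 \<le> \<tau>1" "\<tau>1 < \<tau>2" "\<tau>2 < \<tau>3" and \<epsilon>: "0 < \<epsilon>"
  obtains r where "(\<integral>\<^sup>+t. ennreal (exp (v t - \<epsilon> * tent \<tau>1 \<tau>2 \<tau>3 t)) \<partial>base_measure f) = ennreal r"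
    "0 < r" "r < 1"
proof -
  have abc: "\<tau>1 < \<tau>2" "\<tau>2 < \<tau>3" using \<tau> by auto
  have cont: "continuous_on {0..} (\<lambda>t. v t - \<epsilon> * tent \<tau>1 \<tau>2 \<tau>3 t)"
    using v continuous_on_tent[OF abc] by (intro continuous_intros)
  have "(\<integral>\<^sup>+t. ennreal (exp (v t - \<epsilon> * tent \<tau>1 \<tau>2 \<tau>3 t)) \<partial>base_measure f) < 1"
    unfolding one[symmetric]
  proof (rule nn_integral_exp_less[OF f cont v _ \<tau>(1) less_trans[OF abc]])
    show "v t - \<epsilon> * tent \<tau>1 \<tau>2 \<tau>3 t < v t" if "t \<in> {\<tau>1<..<\<tau>3}" for t
      using tent_pos[OF abc, of t] that \<epsilon> by simp
  qed (use one \<epsilon> tent_nonneg[OF abc] in auto)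
  moreover have "(\<integral>\<^sup>+t. ennreal (exp (v t - \<epsilon> * tent \<tau>1 \<tau>2 \<tau>3 t)) \<partial>base_measure f) \<noteq> 0"
    by (rule nn_integral_exp_pos[OF f cont])
  ultimately show ?thesis
    using that by (cases "\<integral>\<^sup>+t. ennreal (exp (v t - \<epsilon> * tent \<tau>1 \<tau>2 \<tau>3 t)) \<partial>base_measure f")
      (auto simp: ennreal_less_iff)
qed

lemma tent_perturbation_increases_Lfun:
  fixes f :: "real \<Rightarrow> real" and x :: "nat \<Rightarrow> real" and v :: "real \<Rightarrow> real"
  assumes f: "standing_assumptions f" and n: "n \<ge> 1" and v: "v \<in> Vset \<inter> Theta1 f"
    and \<tau>: "0 < \<tau>1" "\<tau>1 < \<tau>2" "\<tau>2 < \<tau>3"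
    and bp: "\<tau>1 \<in> breakpoints v" "\<tau>2 \<in> breakpoints v" "\<tau>3 \<in> breakpoints v"
    and no_data: "\<And>k. k \<in> {1..n} \<Longrightarrow> x k \<notin> {\<tau>1<..<\<tau>3}"
  obtains u where "u \<in> Vset \<inter> Theta1 f" "breakpoints u \<subseteq> breakpoints v"
    "Lfun f x n v < Lfun f x n u"
proof -
  have abc: "\<tau>1 < \<tau>2" "\<tau>2 < \<tau>3" using \<tau> by auto
  have cvx: "convex_on {0..} v" and mono: "mono_on {0..} v" and cont: "continuous_on {0..} v"
    and one: "(\<integral>\<^sup>+t. ennreal (exp (v t)) \<partial>base_measure f) = 1"
    using v unfolding Theta1_def Theta_def Vset_def by auto
  obtain \<epsilon> where \<epsilon>: "0 < \<epsilon>" and g_Theta: "(\<lambda>t. v t - \<epsilon> * tent \<tau>1 \<tau>2 \<tau>3 t) \<in> Theta"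
    using convex_mono_minus_tent[OF cvx mono \<tau> bp] unfolding Theta_def by blast
  obtain r where r: "(\<integral>\<^sup>+t. ennreal (exp (v t - \<epsilon> * tent \<tau>1 \<tau>2 \<tau>3 t)) \<partial>base_measure f) = ennreal r"
      "0 < r" "r < 1"
    using nn_integral_exp_minus_tent[OF f cont one _ abc \<epsilon>] \<tau> by auto
  define u where "u t = v t - \<epsilon> * tent \<tau>1 \<tau>2 \<tau>3 t - ln r" for t
  have "(\<lambda>t. v t + (- \<epsilon>) * tent \<tau>1 \<tau>2 \<tau>3 t + 0) \<in> Vset"
    using v tent_in_Vset[OF abc] by (intro Vset_add_scaled) auto
  then have u: "u \<in> Vset \<inter> Theta1 f"
    using normalize_into_Theta1[OF f _ r(1,2)] g_Theta unfolding u_def by simp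
  have "breakpoints u \<subseteq> breakpoints (\<lambda>t. v t - \<epsilon> * tent \<tau>1 \<tau>2 \<tau>3 t)"
    using breakpoints_add_const[of "\<lambda>t. v t - \<epsilon> * tent \<tau>1 \<tau>2 \<tau>3 t" "- ln r"] unfolding u_def by simp
  with breakpoints_minus_tent[OF abc bp] have bp_u: "breakpoints u \<subseteq> breakpoints v" by blast
  have data: "u (x k) = v (x k) - ln r" if "k \<in> {1..n}" for k
  proof -
    have "tent \<tau>1 \<tau>2 \<tau>3 (x k) = 0" using no_data[OF that] by (intro tent_eq_0[OF abc]) auto
    then show ?thesis by (simp add: u_def)
  qed
  have "(1 / real n) * (\<Sum>k=1..n. v (x k)) < (1 / real n) * (\<Sum>k=1..n. v (x k) - ln r)"
    using n r by (simp add: sum_subtractf field_simps mult_pos_neg)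
  also have "\<dots> = (1 / real n) * (\<Sum>k=1..n. u (x k))"
    using data by simp
  finally have "Lfun f x n v < Lfun f x n u"
    using Lfun_normalized[OF one] Lfun_normalized[where v = u] u by (simp add: Theta1_def)
  then show ?thesis using that u bp_u by blast
qed

lemma strictly_ordered_triple_of_card:
  fixes A :: "real set"
  assumes "finite A" "2 < card A"
  obtains a b c where "a \<in> A" "b \<in> A" "c \<in> A" "a < b" "b < c"
proof -
  define s where "s = sorted_list_of_set A"
  have s: "sorted_wrt (<) s" "set s = A" "length s = card A"
    using assms(1) unfolding s_def by auto
  show ?thesis
    by (rule that[of "s ! 0" "s ! 1" "s ! 2"])
       (use s assms(2) in \<open>auto simp: sorted_wrt_iff_nth_less\<close>)
qed

lemma maximizer_at_most_two_breakpoints_in_data_gap: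
  fixes f :: "real \<Rightarrow> real" and x :: "nat \<Rightarrow> real"
  assumes f: "standing_assumptions f" and n: "n \<ge> 1"
    and \<theta>s: "\<theta>s \<in> V_on B \<inter> Theta1 f"
    and max: "\<forall>v\<in>V_on B \<inter> Theta1 f. Lfun f x n v \<le> Lfun f x n \<theta>s"
    and a: "0 \<le> a" and no_data: "\<And>k. k \<in> {1..n} \<Longrightarrow> x k \<notin> {a<..<b}"
  shows "card (breakpoints \<theta>s \<inter> {a<..<b}) \<le> 2"
proof (rule ccontr)
  have V: "\<theta>s \<in> Vset \<inter> Theta1 f" and bsub: "breakpoints \<theta>s \<subseteq> B"
    using \<theta>s unfolding V_on_def by auto
  assume "\<not> card (breakpoints \<theta>s \<inter> {a<..<b}) \<le> 2"
  then obtain \<tau>1 \<tau>2 \<tau>3 where \<tau>: "\<tau>1 \<in> breakpoints \<theta>s \<inter> {a<..<b}"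
      "\<tau>2 \<in> breakpoints \<theta>s \<inter> {a<..<b}" "\<tau>3 \<in> breakpoints \<theta>s \<inter> {a<..<b}" "\<tau>1 < \<tau>2" "\<tau>2 < \<tau>3"
    using strictly_ordered_triple_of_card Vset_finite_breakpoints V by (metis Int_iff finite_Int not_le)
  moreover have "x k \<notin> {\<tau>1<..<\<tau>3}" if "k \<in> {1..n}" for k
    using no_data[OF that] \<tau>(1,3) by auto
  ultimately obtain u where u: "u \<in> Vset \<inter> Theta1 f" "breakpoints u \<subseteq> breakpoints \<theta>s"
      and better: "Lfun f x n \<theta>s < Lfun f x n u"
    using tent_perturbation_increases_Lfun[OF f n V, of \<tau>1 \<tau>2 \<tau>3 x] a by auto
  have "u \<in> V_on B \<inter> Theta1 f" using u bsub unfolding V_on_def by auto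
  then have "Lfun f x n u \<le> Lfun f x n \<theta>s" using max by blast
  with better show False by simp
qed

theorem mainTheorem7:
  fixes f :: "real \<Rightarrow> real" and x :: "nat \<Rightarrow> real" and n i j :: nat
    and \<theta> \<theta>s :: "real \<Rightarrow> real"
  assumes f: "standing_assumptions f"
    and n: "n \<ge> 1"
    and data: "\<forall>k\<in>{1..n}. x k \<ge> 0"
    and ij: "i \<in> {1..n}" "j \<in> {1..n}" "x i < x j"
    and adj: "\<not> (\<exists>k\<in>{1..n}. x i < x k \<and> x k < x j)"
    and \<theta>: "\<theta> \<in> Vset \<inter> Theta"
    and \<theta>s_mem: "\<theta>s \<in> V_on (breakpoints \<theta>) \<inter> Theta1 f"
    and \<theta>s_max: "\<forall>v\<in>V_on (breakpoints \<theta>) \<inter> Theta1 f. Lfun f x n v \<le> Lfun f x n \<theta>s"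
  shows "finite (breakpoints \<theta>s \<inter> {x i<..<x j}) \<and> card (breakpoints \<theta>s \<inter> {x i<..<x j}) \<le> 2"
proof -
  have "\<theta>s \<in> Vset" using \<theta>s_mem unfolding V_on_def by auto
  then have "finite (breakpoints \<theta>s \<inter> {x i<..<x j})" using Vset_finite_breakpoints by blast
  moreover have "card (breakpoints \<theta>s \<inter> {x i<..<x j}) \<le> 2"
  proof (rule maximizer_at_most_two_breakpoints_in_data_gap[OF f n \<theta>s_mem \<theta>s_max])
    show "0 \<le> x i" using data ij(1) by blast
    show "x k \<notin> {x i<..<x j}" if "k \<in> {1..n}" for k using adj that by auto
  qed
  ultimately show ?thesis ..
qed

end
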